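(* Let $p$ be an odd prime, $s\ge1$, and $r\ge3$ an integer dividing $\frac{p^s+1}2$ or $\frac{p^s-1}2$. Let $\lambda=e^{2\pi i/(2r)}$, define $\Delta_0=1$, $\Delta_1=-\lambda-\lambda^{-1}$, $\Delta_{i+1}=\Delta_1\Delta_i-\Delta_{i-1}$ for $i\ge1$, and $\eta^2=-\frac{(\lambda-\lambda^{-1})^2}{2r}$. Then $\Delta_i\equiv(\Delta_i)^{p^s}\pmod p$ for all $i\ge0$, and $\eta^2\equiv(\eta^2)^{p^s}\pmod p$.
   Context: Congruences are modulo $p$ in the ring $\mathbb Z[\tfrac1{2r},\lambda]$. *)

theory Defs
  imports "HOL-Analysis.Analysis" "HOL-Computational_Algebra.Primes"
begin

inductive_set Zring :: "nat \<Rightarrow> complex \<Rightarrow> complex set" for r :: nat and lam :: complex where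
  one: "1 \<in> Zring r lam"
| half_inv: "1 / (2 * of_nat r) \<in> Zring r lam"
| gen: "lam \<in> Zring r lam"
| neg: "a \<in> Zring r lam \<Longrightarrow> - a \<in> Zring r lam"
| add: "a \<in> Zring r lam \<Longrightarrow> b \<in> Zring r lam \<Longrightarrow> a + b \<in> Zring r lam"
| mult: "a \<in> Zring r lam \<Longrightarrow> b \<in> Zring r lam \<Longrightarrow> a * b \<in> Zring r lam"

definition cong_Zring :: "nat \<Rightarrow> complex \<Rightarrow> nat \<Rightarrow> complex \<Rightarrow> complex \<Rightarrow> bool" where
  "cong_Zring r lam p a b \<longleftrightarrow> (\<exists>c \<in> Zring r lam. a - b = of_nat p * c)"

fun Delta :: "complex \<Rightarrow> nat \<Rightarrow> complex" where
  "Delta lam 0 = 1"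
| "Delta lam (Suc 0) = - lam - inverse lam"
| "Delta lam (Suc (Suc i)) = Delta lam (Suc 0) * Delta lam (Suc i) - Delta lam i"

end

theory Submission
  imports Defs "HOL-Number_Theory.Number_Theory"
begin

text \<open>Put \<open>q = p^s\<close>. Since \<open>2r\<close> divides \<open>q + 1\<close> or \<open>q - 1\<close>, the \<open>q\<close>-th power map sends
  \<open>\<lambda>\<close> to \<open>\<lambda>\<^sup>-\<^sup>1\<close> or to \<open>\<lambda>\<close>, so it fixes \<open>\<Delta>\<^sub>1 = -\<lambda> - \<lambda>\<^sup>-\<^sup>1\<close> modulo \<open>p\<close> (as \<open>q\<close> is odd).
  Modulo \<open>p\<close> this map is the Frobenius, a ring endomorphism, and by Fermat it fixes
  \<open>1/(2r)\<close> (note \<open>p\<close> cannot divide \<open>2r\<close>). Hence its fixed points form a subring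
  containing \<open>\<Delta>\<^sub>1\<close> and \<open>1/(2r)\<close>, and so every \<open>\<Delta>\<^sub>i\<close> and \<open>\<eta>\<^sup>2 = (4 - \<Delta>\<^sub>1\<^sup>2)/(2r)\<close>.\<close>

lemma Zring_zero: "0 \<in> Zring r lam"
  using Zring.add[OF Zring.one Zring.neg[OF Zring.one]] by simp

lemma Zring_power: "a \<in> Zring r lam \<Longrightarrow> a ^ n \<in> Zring r lam"
  by (induction n) (auto intro: Zring.one Zring.mult)

lemma Zring_of_nat: "of_nat n \<in> Zring r lam"
  by (induction n) (auto intro: Zring.one Zring.add Zring_zero)

lemma Zring_sum: "(\<And>k. k \<in> A \<Longrightarrow> f k \<in> Zring r lam) \<Longrightarrow> sum f A \<in> Zring r lam"
  by (induction A rule: infinite_finite_induct) (auto intro: Zring_zero Zring.add)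

lemma inverse_in_Zring_of_root_of_unity:
  assumes "lam ^ m = 1" "0 < m"
  shows "inverse lam \<in> Zring r lam"
proof -
  obtain k where "m = Suc k"
    using assms(2) gr0_implies_Suc by blast
  then have "lam * lam ^ k = 1"
    using assms(1) by simp
  then have "inverse lam = lam ^ k"
    by (rule inverse_unique)
  then show ?thesis
    by (simp add: Zring_power Zring.gen)
qed

lemma cong_Zring_refl: "cong_Zring r lam p a a"
  unfolding cong_Zring_def using Zring_zero by force

lemma cong_Zring_sym: "cong_Zring r lam p a b \<Longrightarrow> cong_Zring r lam p b a"
  unfolding cong_Zring_def by (metis Zring.neg minus_diff_eq mult_minus_right)

lemma cong_Zring_trans:
  assumes "cong_Zring r lam p a b" "cong_Zring r lam p b c"
  shows "cong_Zring r lam p a c"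
proof -
  obtain x y where "x \<in> Zring r lam" "y \<in> Zring r lam"
    and "a - b = of_nat p * x" "b - c = of_nat p * y"
    using assms unfolding cong_Zring_def by blast
  then show ?thesis
    unfolding cong_Zring_def by (intro bexI[of _ "x + y"]) (auto intro: Zring.add simp: algebra_simps)
qed

lemma cong_Zring_add:
  assumes "cong_Zring r lam p a b" "cong_Zring r lam p c d"
  shows "cong_Zring r lam p (a + c) (b + d)"
proof -
  obtain x y where "x \<in> Zring r lam" "y \<in> Zring r lam"
    and "a - b = of_nat p * x" "c - d = of_nat p * y"
    using assms unfolding cong_Zring_def by blast
  then show ?thesis
    unfolding cong_Zring_def by (intro bexI[of _ "x + y"]) (auto intro: Zring.add simp: algebra_simps)
qed

lemma cong_Zring_uminus:
  assumes "cong_Zring r lam p a b"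
  shows "cong_Zring r lam p (- a) (- b)"
proof -
  obtain x where "x \<in> Zring r lam" "a - b = of_nat p * x"
    using assms unfolding cong_Zring_def by blast
  then show ?thesis
    unfolding cong_Zring_def by (intro bexI[of _ "- x"]) (auto intro: Zring.neg simp: algebra_simps)
qed

lemma cong_Zring_mult:
  assumes "cong_Zring r lam p a b" "cong_Zring r lam p c d"
    and "a \<in> Zring r lam" "d \<in> Zring r lam"
  shows "cong_Zring r lam p (a * c) (b * d)"
proof -
  obtain x y where "x \<in> Zring r lam" "y \<in> Zring r lam"
    and "a - b = of_nat p * x" "c - d = of_nat p * y"
    using assms(1,2) unfolding cong_Zring_def by blast
  moreover have "a * c - b * d = a * (c - d) + (a - b) * d"
    by (simp add: algebra_simps)
  moreover have "a * y + x * d \<in> Zring r lam"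
    using calculation assms(3,4) by (auto intro: Zring.add Zring.mult)
  ultimately show ?thesis
    unfolding cong_Zring_def by (intro bexI[of _ "a * y + x * d"]) (auto simp: algebra_simps)
qed

lemma cong_Zring_power:
  "cong_Zring r lam p a b \<Longrightarrow> a \<in> Zring r lam \<Longrightarrow> b \<in> Zring r lam
    \<Longrightarrow> cong_Zring r lam p (a ^ n) (b ^ n)"
  by (induction n) (auto intro: cong_Zring_refl cong_Zring_mult Zring_power)

lemma cong_Zring_add_power_prime:
  assumes "prime p" "a \<in> Zring r lam" "b \<in> Zring r lam"
  shows "cong_Zring r lam p ((a + b) ^ p) (a ^ p + b ^ p)"
proof -
  define middle where
    "middle = (\<Sum>k\<in>{1..<p}. of_nat ((p choose k) div p) * a ^ k * b ^ (p - k))"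
  have "p > 0"
    using assms(1) prime_gt_0_nat by blast
  have "(a + b) ^ p = (\<Sum>k\<in>insert 0 (insert p {1..<p}). of_nat (p choose k) * a ^ k * b ^ (p - k))"
    unfolding binomial_ring using \<open>p > 0\<close> by (intro sum.cong) auto
  also have "\<dots> = b ^ p + a ^ p + (\<Sum>k\<in>{1..<p}. of_nat (p choose k) * a ^ k * b ^ (p - k))"
    using \<open>p > 0\<close> by (subst sum.insert; auto)+
  also have "(\<Sum>k\<in>{1..<p}. of_nat (p choose k) * a ^ k * b ^ (p - k)) = of_nat p * middle"
    unfolding middle_def sum_distrib_left
  proof (rule sum.cong)
    fix k assume "k \<in> {1..<p}"
    then have "p choose k = p * ((p choose k) div p)"
      using dvd_choose_prime[of k p] assms(1) by auto
    then show "of_nat (p choose k) * a ^ k * b ^ (p - k)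
        = of_nat p * (of_nat ((p choose k) div p) * a ^ k * b ^ (p - k))"
      by (metis of_nat_mult mult.assoc)
  qed simp
  finally have "(a + b) ^ p - (a ^ p + b ^ p) = of_nat p * middle"
    by simp
  moreover have "middle \<in> Zring r lam"
    unfolding middle_def by (intro Zring_sum Zring.mult Zring_of_nat Zring_power assms)
  ultimately show ?thesis
    unfolding cong_Zring_def by blast
qed

lemma cong_Zring_add_power_prime_power:
  assumes "prime p" "a \<in> Zring r lam" "b \<in> Zring r lam"
  shows "cong_Zring r lam p ((a + b) ^ (p ^ n)) (a ^ (p ^ n) + b ^ (p ^ n))"
proof (induction n)
  case 0
  then show ?case by (simp add: cong_Zring_refl)
next
  case (Suc n)
  have "cong_Zring r lam p (((a + b) ^ (p ^ n)) ^ p) ((a ^ (p ^ n) + b ^ (p ^ n)) ^ p)"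
    by (rule cong_Zring_power[OF Suc]) (auto intro: Zring_power Zring.add assms)
  moreover have "cong_Zring r lam p ((a ^ (p ^ n) + b ^ (p ^ n)) ^ p)
      ((a ^ (p ^ n)) ^ p + (b ^ (p ^ n)) ^ p)"
    by (rule cong_Zring_add_power_prime) (auto intro: Zring_power assms)
  ultimately show ?case
    by (metis cong_Zring_trans power_Suc2 power_mult)
qed

definition frobenius_fixed :: "nat \<Rightarrow> complex \<Rightarrow> nat \<Rightarrow> nat \<Rightarrow> complex \<Rightarrow> bool" where
  "frobenius_fixed r lam p q x \<longleftrightarrow> x \<in> Zring r lam \<and> cong_Zring r lam p x (x ^ q)"

lemma frobenius_fixed_one: "frobenius_fixed r lam p q 1"
  unfolding frobenius_fixed_def by (simp add: Zring.one cong_Zring_refl)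

lemma frobenius_fixed_add:
  assumes "prime p" "frobenius_fixed r lam p (p ^ n) x" "frobenius_fixed r lam p (p ^ n) y"
  shows "frobenius_fixed r lam p (p ^ n) (x + y)"
  using assms cong_Zring_add_power_prime_power[of p x r lam y n] unfolding frobenius_fixed_def
  by (meson Zring.add cong_Zring_add cong_Zring_sym cong_Zring_trans)

lemma frobenius_fixed_mult:
  "frobenius_fixed r lam p q x \<Longrightarrow> frobenius_fixed r lam p q y \<Longrightarrow> frobenius_fixed r lam p q (x * y)"
  unfolding frobenius_fixed_def by (metis Zring_power Zring.mult cong_Zring_mult power_mult_distrib)

lemma frobenius_fixed_uminus:
  "odd q \<Longrightarrow> frobenius_fixed r lam p q x \<Longrightarrow> frobenius_fixed r lam p q (- x)"
  unfolding frobenius_fixed_def by (simp add: Zring.neg cong_Zring_uminus)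

lemma frobenius_fixed_diff:
  assumes "prime p" "odd p" "frobenius_fixed r lam p (p ^ n) x" "frobenius_fixed r lam p (p ^ n) y"
  shows "frobenius_fixed r lam p (p ^ n) (x - y)"
  using assms frobenius_fixed_add[of p r lam n x "- y"] frobenius_fixed_uminus by simp

lemma frobenius_fixed_of_nat:
  "prime p \<Longrightarrow> frobenius_fixed r lam p (p ^ n) (of_nat k)"
proof (induction k)
  case 0
  then show ?case
    by (simp add: frobenius_fixed_def Zring_zero cong_Zring_refl power_0_left)
next
  case (Suc k)
  then show ?case
    using frobenius_fixed_add[of p r lam n 1 "of_nat k"] frobenius_fixed_one by simp
qed

lemma frobenius_fixed_power_exponent:
  assumes "frobenius_fixed r lam p q x"
  shows "frobenius_fixed r lam p (q ^ n) x"
proof (induction n)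
  case 0
  then show ?case using assms by (simp add: frobenius_fixed_def cong_Zring_refl)
next
  case (Suc n)
  have "cong_Zring r lam p (x ^ q) ((x ^ q ^ n) ^ q)"
    using Suc assms by (intro cong_Zring_power) (auto simp: frobenius_fixed_def intro: Zring_power)
  then show ?case
    using assms unfolding frobenius_fixed_def
    by (metis cong_Zring_trans power_Suc2 power_mult)
qed

lemma frobenius_fixed_inverse_of_nat:
  assumes "prime p" "\<not> p dvd m" "x \<in> Zring r lam" "x * of_nat m = 1"
  shows "frobenius_fixed r lam p p x"
proof -
  have "[m ^ (p - 1) = 1] (mod p)"
    using fermat_theorem[OF assms(1,2)] .
  then obtain k where k: "m ^ (p - 1) = 1 + p * k"
    using assms(1) unfolding cong_to_1'_nat by (auto simp: mult.commute)
  have "p = Suc (p - 1)"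
    using prime_gt_0_nat[OF assms(1)] by simp
  then have "x ^ p * of_nat m ^ (p - 1) = x * (x * of_nat m) ^ (p - 1)"
    by (metis power_Suc power_mult_distrib mult.assoc)
  then have x_eq: "x ^ p * of_nat m ^ (p - 1) = x"
    using assms(4) by simp
  have m_eq: "(of_nat m :: complex) ^ (p - 1) = 1 + of_nat p * of_nat k"
    using arg_cong[OF k, of "of_nat :: nat \<Rightarrow> complex"] by simp
  have "x - x ^ p = x ^ p * of_nat m ^ (p - 1) - x ^ p"
    using x_eq by simp
  also have "\<dots> = of_nat p * (of_nat k * x ^ p)"
    unfolding m_eq by (simp add: algebra_simps)
  finally have "x - x ^ p = of_nat p * (of_nat k * x ^ p)" .
  then show ?thesis
    unfolding frobenius_fixed_def cong_Zring_def
    using assms(3) by (blast intro: Zring.mult Zring_of_nat Zring_power)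
qed

lemma Delta_frobenius_fixed:
  assumes "prime p" "odd p" "frobenius_fixed r lam p (p ^ n) (Delta lam 1)"
  shows "frobenius_fixed r lam p (p ^ n) (Delta lam i)"
proof -
  have "frobenius_fixed r lam p (p ^ n) (Delta lam i) \<and> frobenius_fixed r lam p (p ^ n) (Delta lam (Suc i))"
  proof (induction i)
    case 0
    then show ?case using assms(3) by (simp add: frobenius_fixed_one)
  next
    case (Suc i)
    then show ?case
      using assms by (auto intro: frobenius_fixed_diff frobenius_fixed_mult)
  qed
  then show ?thesis ..
qed

lemma power_eq_self_or_inverse_of_root_of_unity:
  fixes z :: "'a :: field"
  assumes "z ^ m = 1" "m dvd q + 1 \<or> m dvd q - 1" "0 < q"
  shows "z ^ q = z \<or> z ^ q = inverse z"
proof -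
  obtain q' where q: "q = Suc q'"
    using assms(3) gr0_implies_Suc by blast
  from assms(2) show ?thesis
  proof
    assume "m dvd q + 1"
    then obtain k where "q + 1 = m * k" ..
    then have "z ^ (q + 1) = (z ^ m) ^ k"
      by (simp only: power_mult)
    then have "z * z ^ q = 1"
      using assms(1) by simp
    then have "inverse z = z ^ q"
      by (rule inverse_unique)
    then show ?thesis
      by simp
  next
    assume "m dvd q - 1"
    then obtain k where "q' = m * k"
      using q by auto
    then have "z ^ q' = 1"
      using assms(1) by (simp add: power_mult)
    then show ?thesis
      using q by simp
  qed
qed

lemma Delta_one_frobenius_fixed:
  assumes "prime p" "odd p" "inverse lam \<in> Zring r lam"
    and "lam ^ (p ^ n) = lam \<or> lam ^ (p ^ n) = inverse lam"
  shows "frobenius_fixed r lam p (p ^ n) (Delta lam 1)"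
proof -
  have in_Zring: "- lam \<in> Zring r lam" "- inverse lam \<in> Zring r lam"
    using assms(3) by (auto intro: Zring.neg Zring.gen)
  have "Delta lam 1 = (- lam) + (- inverse lam)"
    by simp
  moreover have "(- lam) ^ (p ^ n) + (- inverse lam) ^ (p ^ n) = Delta lam 1"
    using assms(2,4) by (auto simp: power_inverse)
  ultimately show ?thesis
    unfolding frobenius_fixed_def
    using cong_Zring_add_power_prime_power[OF assms(1) in_Zring, of n] Zring.add[OF in_Zring]
    by (auto intro: cong_Zring_sym)
qed

lemma square_diff_inverse_eq: "z \<noteq> 0 \<Longrightarrow> (z - inverse z) ^ 2 = Delta z 1 * Delta z 1 - 4"
  by (simp add: field_simps power2_eq_square)

lemma exp_root_of_unity_power: "0 < n \<Longrightarrow> exp (2 * of_real pi * \<i> / of_nat n) ^ n = 1"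
  by (simp add: exp_of_nat_mult[symmetric])

lemma dvd_succ_or_pred_of_dvd_half:
  fixes q r :: nat
  assumes "odd q" "r dvd (q + 1) div 2 \<or> r dvd (q - 1) div 2"
  shows "2 * r dvd q + 1 \<or> 2 * r dvd q - 1"
proof -
  have "q + 1 = 2 * ((q + 1) div 2)" "q - 1 = 2 * ((q - 1) div 2)"
    using assms(1) by presburger+
  then show ?thesis
    using assms(2) by (metis mult_dvd_mono dvd_refl)
qed

lemma prime_not_dvd_of_dvd_succ_or_pred:
  fixes p q m :: nat
  assumes "prime p" "p dvd q" "0 < q" "m dvd q + 1 \<or> m dvd q - 1"
  shows "\<not> p dvd m"
proof
  assume "p dvd m"
  then have "p dvd q + 1 \<or> p dvd q - 1"
    using assms(4) by (meson dvd_trans)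
  then have "p dvd 1"
  proof
    assume "p dvd q + 1"
    then show ?thesis
      using dvd_add_right_iff[OF assms(2)] by blast
  next
    assume "p dvd q - 1"
    then have "p dvd q - (q - 1)"
      by (rule dvd_diff_nat[OF assms(2)])
    moreover have "q - (q - 1) = 1"
      using assms(3) by linarith
    ultimately show ?thesis
      by simp
  qed
  then show False
    using assms(1) by simp
qed

theorem lemma3:
  fixes p s r :: nat
  assumes "prime p" and "odd p" and "s \<ge> 1" and "r \<ge> 3"
    and "r dvd (p ^ s + 1) div 2 \<or> r dvd (p ^ s - 1) div 2"
  defines "lam \<equiv> exp (2 * of_real pi * \<i> / (2 * of_nat r))"
  defines "eta2 \<equiv> - ((lam - inverse lam) ^ 2) / (2 * of_nat r)"
  shows "(\<forall>i. cong_Zring r lam p (Delta lam i) ((Delta lam i) ^ (p ^ s)))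
         \<and> cong_Zring r lam p eta2 (eta2 ^ (p ^ s))"
proof -
  have dvd_pm1: "2 * r dvd p ^ s + 1 \<or> 2 * r dvd p ^ s - 1"
    using dvd_succ_or_pred_of_dvd_half assms(2,5) by simp
  have "\<not> p dvd 2 * r"
    using prime_not_dvd_of_dvd_succ_or_pred[OF assms(1) _ _ dvd_pm1] assms(1,3)
    by (simp add: prime_gt_0_nat)
  have "lam \<noteq> 0" "lam ^ (2 * r) = 1"
    using exp_root_of_unity_power[of "2 * r"] assms(4) by (simp_all add: lam_def)
  then have "lam ^ (p ^ s) = lam \<or> lam ^ (p ^ s) = inverse lam" "inverse lam \<in> Zring r lam"
    using power_eq_self_or_inverse_of_root_of_unity[OF _ dvd_pm1] inverse_in_Zring_of_root_of_unity
      assms(1,4) by (simp_all add: prime_gt_0_nat)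
  then have Delta_one: "frobenius_fixed r lam p (p ^ s) (Delta lam 1)"
    using Delta_one_frobenius_fixed assms(1,2) by blast
  have "frobenius_fixed r lam p (p ^ s) (of_nat 4 - Delta lam 1 * Delta lam 1)"
    using Delta_one assms(1,2) by (intro frobenius_fixed_diff frobenius_fixed_mult frobenius_fixed_of_nat)
  moreover have "frobenius_fixed r lam p (p ^ s) (1 / (2 * of_nat r))"
    using frobenius_fixed_inverse_of_nat[OF assms(1) \<open>\<not> p dvd 2 * r\<close> Zring.half_inv] assms(4)
    by (intro frobenius_fixed_power_exponent) simp
  moreover have "eta2 = (of_nat 4 - Delta lam 1 * Delta lam 1) * (1 / (2 * of_nat r))"
    unfolding eta2_def square_diff_inverse_eq[OF \<open>lam \<noteq> 0\<close>] by simp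
  ultimately have "frobenius_fixed r lam p (p ^ s) eta2"
    by (simp only: frobenius_fixed_mult)
  then show ?thesis
    using Delta_frobenius_fixed[OF assms(1,2) Delta_one] unfolding frobenius_fixed_def by blast
qed

end
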